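(* Let $n\ge 3$ and let $K_n$ be the complete graph on $n$ vertices with every edge having conductance $1$. Let $r\ne s$ be vertices, let $R_{rs}$ be the effective resistance between $r$ and $s$ in $K_n$, and let $(a,b)$ be an edge. Let $R'_{rs}$ be the effective resistance between $r$ and $s$ after the edge $(a,b)$ is altered, and write $R'_{rs}=R_{rs}-\Delta$. (1) If the resistance of $(a,b)$ goes to $0$ (its conductance tends to $+\infty$, with $R'_{rs}$ understood as the limit), then $\Delta=\frac{2}{n}$ if $\{a,b\}=\{r,s\}$; $\Delta=\frac{1}{2n}$ if $\{a,b\}$ and $\{r,s\}$ share exactly one vertex; and $\Delta=0$ if $\{a,b\}\cap\{r,s\}=\emptyset$. (2) If the resistance of $(a,b)$ goes to $+\infty$ (the edge is removed), then $\Delta=-\frac{4}{n(n-2)}$ if $\{a,b\}=\{r,s\}$; $\Delta=-\frac{1}{n(n-2)}$ if $\{a,b\}$ and $\{r,s\}$ share exactly one vertex; and $\Delta=0$ if $\{a,b\}\cap\{r,s\}=\emptyset$.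
   Context: For vertices $r,s$ of an electrical network (a graph with edge conductances), the effective resistance between them is the reciprocal of the net current flowing through the network when a unit voltage difference is applied between $r$ and $s$. *)

theory Defs
  imports "HOL-Analysis.Analysis"
begin

text \<open>Electrical network on vertex set {0..<n}; c i j is the conductance of edge {i,j}
  (symmetric, nonnegative, 0 means no edge).\<close>

definition unit_potential :: "nat \<Rightarrow> (nat \<Rightarrow> nat \<Rightarrow> real) \<Rightarrow> nat \<Rightarrow> nat \<Rightarrow> (nat \<Rightarrow> real) \<Rightarrow> bool" where
  "unit_potential n c r s v \<longleftrightarrow> v r = 1 \<and> v s = 0 \<and>
     (\<forall>i<n. i \<noteq> r \<longrightarrow> i \<noteq> s \<longrightarrow> (\<Sum>j<n. c i j * (v i - v j)) = 0)"

definition net_current :: "nat \<Rightarrow> (nat \<Rightarrow> nat \<Rightarrow> real) \<Rightarrow> nat \<Rightarrow> (nat \<Rightarrow> real) \<Rightarrow> real" where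
  "net_current n c r v = (\<Sum>j<n. c r j * (v r - v j))"

definition eff_resistance :: "nat \<Rightarrow> (nat \<Rightarrow> nat \<Rightarrow> real) \<Rightarrow> nat \<Rightarrow> nat \<Rightarrow> real" where
  "eff_resistance n c r s =
     1 / (THE I. \<exists>v. unit_potential n c r s v \<and> I = net_current n c r v)"

definition complete_cond :: "nat \<Rightarrow> nat \<Rightarrow> real" where
  "complete_cond i j = (if i = j then 0 else 1)"

definition altered_cond :: "nat \<Rightarrow> nat \<Rightarrow> real \<Rightarrow> nat \<Rightarrow> nat \<Rightarrow> real" where
  "altered_cond a b t i j = (if i = j then 0 else if {i, j} = {a, b} then t else 1)"

end

theory Submission
  imports Defs "HOL-Real_Asymp.Real_Asymp"
begin

(* Two unit potentials differ by a function that is harmonic away from r and s and vanishes at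
   r and s; its Dirichlet energy is therefore zero, so it is constant along every edge of positive
   conductance. In the complete graph with one altered edge every vertex is joined to r or to s by
   an unaltered edge, so the unit potential is unique and the effective resistance is the reciprocal
   of the current of any potential we can guess. Kirchhoff's law at a vertex of the complete graph
   says that its potential is the mean of all potentials, which makes guessing easy: 1/2 off {r, s}
   when the altered edge is {r, s} or disjoint from it, and for an altered edge {r, x} a value y at x
   and (1 + y)/3 elsewhere. For conductance t >= 0 this gives R = 2/(n + 2t - 2), 2/n and
   (2n + 3t - 3)/(n(n + 2t - 2)) respectively (an edge at s reduces to one at r since R_rs = R_sr);
   letting t -> infinity and setting t = 0 yields the theorem. *)

lemma sum_lessThan_const_off:
  assumes "P \<subseteq> {..<n}" "\<And>j. j < n \<Longrightarrow> j \<notin> P \<Longrightarrow> v j = w"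
  shows "(\<Sum>j<n. v j) = real n * w + (\<Sum>j\<in>P. v j - w)"
proof -
  have "(\<Sum>j<n. v j - w) = (\<Sum>j\<in>P. v j - w)"
    by (rule sum.mono_neutral_right) (use assms in auto)
  then show ?thesis by (simp add: sum_subtractf)
qed

lemma total_flow_eq_0:
  assumes "\<And>i j. c i j = c j i"
  shows "(\<Sum>i<n. \<Sum>j<n. c i j * (v i - v j)) = (0::real)"
proof -
  have "(\<Sum>i<n. \<Sum>j<n. c i j * (v i - v j)) = (\<Sum>i<n. \<Sum>j<n. c j i * (v j - v i))"
    by (rule sum.swap)
  also have "\<dots> = - (\<Sum>i<n. \<Sum>j<n. c i j * (v i - v j))"
    by (simp add: assms sum_negf[symmetric] algebra_simps)
  finally show ?thesis by simp
qed

lemma dirichlet_energy_eq: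
  assumes "\<And>i j. c i j = c j i"
  shows "(\<Sum>i<n. v i * (\<Sum>j<n. c i j * (v i - v j))) =
    (\<Sum>i<n. \<Sum>j<n. c i j * (v i - v j)\<^sup>2) / (2::real)"
proof -
  define A where "A = (\<Sum>i<n. \<Sum>j<n. c i j * v i * (v i - v j))"
  define B where "B = (\<Sum>i<n. \<Sum>j<n. c i j * v j * (v i - v j))"
  have "A = (\<Sum>i<n. \<Sum>j<n. c j i * v j * (v j - v i))"
    unfolding A_def by (rule sum.swap)
  also have "\<dots> = - B"
    unfolding B_def by (simp add: assms sum_negf[symmetric] algebra_simps)
  finally have "A = - B" .
  moreover have "(\<Sum>i<n. \<Sum>j<n. c i j * (v i - v j)\<^sup>2) = A - B"
    unfolding A_def B_def by (simp add: sum_subtractf[symmetric] power2_eq_square algebra_simps)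
  moreover have "(\<Sum>i<n. v i * (\<Sum>j<n. c i j * (v i - v j))) = A"
    unfolding A_def by (simp add: sum_distrib_left algebra_simps)
  ultimately show ?thesis by simp
qed

lemma harmonic_zero_boundary_const_on_edges:
  fixes c :: "nat \<Rightarrow> nat \<Rightarrow> real"
  assumes sym: "\<And>i j. c i j = c j i" and nonneg: "\<And>i j. c i j \<ge> 0"
    and harmonic: "\<And>i. i < n \<Longrightarrow> i \<noteq> r \<Longrightarrow> i \<noteq> s \<Longrightarrow> (\<Sum>j<n. c i j * (d i - d j)) = 0"
    and "d r = 0" "d s = 0" "i < n" "j < n" "c i j > 0"
  shows "d i = d j"
proof -
  have "(\<Sum>i<n. d i * (\<Sum>j<n. c i j * (d i - d j))) = 0"
    by (rule sum.neutral) (use harmonic \<open>d r = 0\<close> \<open>d s = 0\<close> in force)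
  then have "(\<Sum>i<n. \<Sum>j<n. c i j * (d i - d j)\<^sup>2) = 0"
    using dirichlet_energy_eq[where c = c and v = d and n = n] sym by simp
  then have "c i j * (d i - d j)\<^sup>2 = 0"
    using \<open>i < n\<close> \<open>j < n\<close> nonneg
    by (simp add: sum_nonneg_eq_0_iff sum_nonneg)
  then show ?thesis using \<open>c i j > 0\<close> by simp
qed

lemma sum_flow_reflect:
  "(\<Sum>j<n. c i j * ((1 - v i) - (1 - v j))) = - (\<Sum>j<n. c i j * (v i - v j :: real))"
  unfolding sum_negf[symmetric] by (rule sum.cong) (simp_all add: algebra_simps)

lemma unit_potential_swap:
  "unit_potential n c r s v \<Longrightarrow> unit_potential n c s r (\<lambda>i. 1 - v i)"
  unfolding unit_potential_def sum_flow_reflect by auto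

lemma net_current_swap:
  assumes sym: "\<And>i j. c i j = c j i" and v: "unit_potential n c r s v"
    and "r < n" "s < n" "r \<noteq> s"
  shows "net_current n c s (\<lambda>i. 1 - v i) = net_current n c r v"
proof -
  let ?flow = "\<lambda>i. \<Sum>j<n. c i j * (v i - v j)"
  have "(\<Sum>i<n. ?flow i) = (\<Sum>i\<in>{r, s}. ?flow i)"
    by (rule sum.mono_neutral_right) (use v assms(3-) in \<open>auto simp: unit_potential_def\<close>)
  then have "?flow r + ?flow s = 0"
    using total_flow_eq_0[where c = c and v = v and n = n] sym \<open>r \<noteq> s\<close> by simp
  then show ?thesis
    unfolding net_current_def sum_flow_reflect by simp
qed

lemma eff_resistance_commute:
  assumes sym: "\<And>i j. c i j = c j i" and "r < n" "s < n" "r \<noteq> s"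
  shows "eff_resistance n c s r = eff_resistance n c r s"
proof -
  have reflect: "\<exists>v. unit_potential n c p q v \<and> I = net_current n c p v"
    if "p < n" "q < n" "p \<noteq> q" "unit_potential n c q p v" "I = net_current n c q v" for p q v I
  proof (intro exI conjI)
    show "unit_potential n c p q (\<lambda>i. 1 - v i)"
      using that(4) by (rule unit_potential_swap)
    show "I = net_current n c p (\<lambda>i. 1 - v i)"
      using net_current_swap[OF sym that(4) that(2,1)] that(3,5) by simp
  qed
  have "(\<exists>v. unit_potential n c s r v \<and> I = net_current n c s v) \<longleftrightarrow>
        (\<exists>v. unit_potential n c r s v \<and> I = net_current n c r v)" for I
    using reflect[of r s] reflect[of s r] assms(2-4) by blast
  then show ?thesis unfolding eff_resistance_def by simp
qed

lemma altered_cond_commute: "altered_cond a b = altered_cond b a"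
  by (auto simp: fun_eq_iff altered_cond_def insert_commute)

lemma altered_cond_sym: "altered_cond a b t i j = altered_cond a b t j i"
  by (simp add: altered_cond_def insert_commute)

lemma complete_cond_eq_altered_cond: "complete_cond = altered_cond a b 1"
  by (auto simp: fun_eq_iff complete_cond_def altered_cond_def)

lemma sum_flow_altered_cond:
  assumes "i < n" "a < n" "b < n" "a \<noteq> b"
  shows "(\<Sum>j<n. altered_cond a b t i j * (v i - v j)) = real n * v i - (\<Sum>j<n. v j)
     + (if i = a then (t - 1) * (v a - v b) else if i = b then (t - 1) * (v b - v a) else 0)"
proof -
  define e where "e j = (if i = a \<and> j = b then (t - 1) * (v a - v b)
      else if i = b \<and> j = a then (t - 1) * (v b - v a) else 0)" for j
  have "altered_cond a b t i j * (v i - v j) = (v i - v j) + e j" for j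
    unfolding altered_cond_def e_def using assms(4) by (auto simp: doubleton_eq_iff algebra_simps)
  moreover have "(\<Sum>j<n. e j) =
      (if i = a then (t - 1) * (v a - v b) else if i = b then (t - 1) * (v b - v a) else 0)"
  proof (cases "i = a")
    case True
    then have "e j = (if j = b then (t - 1) * (v a - v b) else 0)" for j
      unfolding e_def using assms(4) by auto
    then show ?thesis using True assms(3) by simp
  next
    case False
    then have "e j = (if i = b then (if j = a then (t - 1) * (v b - v a) else 0) else 0)" for j
      unfolding e_def by auto
    then show ?thesis using False assms(2) by simp
  qed
  ultimately show ?thesis by (simp add: sum.distrib sum_subtractf)
qed

lemma unit_potential_altered_cond_unique:
  assumes v: "unit_potential n (altered_cond a b t) r s v"
    and w: "unit_potential n (altered_cond a b t) r s w"
    and "t \<ge> 0" "r < n" "s < n" "r \<noteq> s" "i < n"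
  shows "v i = w i"
proof -
  let ?c = "altered_cond a b t"
  define d where "d i = v i - w i" for i
  have sym: "\<And>i j. ?c i j = ?c j i" by (rule altered_cond_sym)
  have nonneg: "\<And>i j. ?c i j \<ge> 0" using \<open>t \<ge> 0\<close> by (simp add: altered_cond_def)
  have harmonic: "(\<Sum>j<n. ?c i j * (d i - d j)) = 0" if "i < n" "i \<noteq> r" "i \<noteq> s" for i
  proof -
    have "(\<Sum>j<n. ?c i j * (d i - d j)) =
        (\<Sum>j<n. ?c i j * (v i - v j)) - (\<Sum>j<n. ?c i j * (w i - w j))"
      unfolding d_def by (simp add: sum_subtractf[symmetric] algebra_simps)
    then show ?thesis using v w that by (simp add: unit_potential_def)
  qed
  have "d r = 0" "d s = 0" using v w by (simp_all add: d_def unit_potential_def)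
  note const = harmonic_zero_boundary_const_on_edges[OF sym nonneg harmonic this]
  have "d i = 0"
  proof -
    \<comment> \<open>only the edge {a, b} is altered, so {i, r} or {i, s} has conductance 1\<close>
    consider "i = r \<or> i = s" | "i \<noteq> s" "{i, s} \<noteq> {a, b}" | "i \<noteq> r" "{i, r} \<noteq> {a, b}"
      using \<open>r \<noteq> s\<close> by (auto simp: doubleton_eq_iff)
    then show ?thesis
    proof cases
      case 1
      then show ?thesis using \<open>d r = 0\<close> \<open>d s = 0\<close> by auto
    next
      case 2
      then show ?thesis using const[of i s] \<open>i < n\<close> \<open>s < n\<close> \<open>d s = 0\<close>
        by (simp add: altered_cond_def)
    next
      case 3
      then show ?thesis using const[of i r] \<open>i < n\<close> \<open>r < n\<close> \<open>d r = 0\<close>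
        by (simp add: altered_cond_def)
    qed
  qed
  then show ?thesis by (simp add: d_def)
qed

lemma eff_resistance_altered_cond:
  assumes v: "unit_potential n (altered_cond a b t) r s v"
    and "t \<ge> 0" "r < n" "s < n" "r \<noteq> s"
  shows "eff_resistance n (altered_cond a b t) r s = 1 / net_current n (altered_cond a b t) r v"
proof -
  have "(THE I. \<exists>w. unit_potential n (altered_cond a b t) r s w \<and>
      I = net_current n (altered_cond a b t) r w) = net_current n (altered_cond a b t) r v"
  proof (rule the_equality)
    fix I assume "\<exists>w. unit_potential n (altered_cond a b t) r s w \<and>
      I = net_current n (altered_cond a b t) r w"
    then obtain w where w: "unit_potential n (altered_cond a b t) r s w"
      and I: "I = net_current n (altered_cond a b t) r w" by blast
    have "w i = v i" if "i < n" for i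
      using unit_potential_altered_cond_unique[OF w v assms(2-5) that] .
    then show "I = net_current n (altered_cond a b t) r v"
      unfolding I net_current_def using \<open>r < n\<close> by simp
  qed (use v in blast)
  then show ?thesis unfolding eff_resistance_def by simp
qed

definition midpoint_potential :: "nat \<Rightarrow> nat \<Rightarrow> nat \<Rightarrow> real" where
  "midpoint_potential r s i = (if i = r then 1 else if i = s then 0 else 1 / 2)"

lemma midpoint_potential_simps:
  "midpoint_potential r s r = 1"
  "r \<noteq> s \<Longrightarrow> midpoint_potential r s s = 0"
  "i \<noteq> r \<Longrightarrow> i \<noteq> s \<Longrightarrow> midpoint_potential r s i = 1 / 2"
  by (simp_all add: midpoint_potential_def)

lemma sum_midpoint_potential:
  assumes "r < n" "s < n" "r \<noteq> s"
  shows "(\<Sum>j<n. midpoint_potential r s j) = real n / 2"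
  using sum_lessThan_const_off[of "{r, s}" n "midpoint_potential r s" "1 / 2"] assms
  by (simp add: midpoint_potential_simps)

lemma eff_resistance_altered_cond_same_edge:
  assumes "{a, b} = {r, s}" "t \<ge> 0" "r < n" "s < n" "r \<noteq> s"
  shows "eff_resistance n (altered_cond a b t) r s = 2 / (real n + 2 * t - 2)"
proof -
  have c: "altered_cond a b t = altered_cond r s t"
    using assms(1) altered_cond_commute[of r s] by (auto simp: doubleton_eq_iff)
  let ?v = "midpoint_potential r s"
  have flow: "(\<Sum>j<n. altered_cond r s t i j * (?v i - ?v j)) = real n * ?v i - real n / 2
      + (if i = r then t - 1 else if i = s then 1 - t else 0)" if "i < n" for i
    using sum_flow_altered_cond[OF that assms(3-5), of t ?v] sum_midpoint_potential[OF assms(3-5)]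
      midpoint_potential_simps(1,2)[of r s] \<open>r \<noteq> s\<close> by simp
  have up: "unit_potential n (altered_cond r s t) r s ?v"
    unfolding unit_potential_def using flow midpoint_potential_simps \<open>r \<noteq> s\<close> by simp
  have current: "net_current n (altered_cond r s t) r ?v = (real n + 2 * t - 2) / 2"
    unfolding net_current_def flow[OF \<open>r < n\<close>] by (simp add: midpoint_potential_simps field_simps)
  show ?thesis unfolding c eff_resistance_altered_cond[OF up assms(2-5)] current by simp
qed

lemma eff_resistance_altered_cond_disjoint_edge:
  assumes "{a, b} \<inter> {r, s} = {}" "a < n" "b < n" "a \<noteq> b" "t \<ge> 0" "r < n" "s < n" "r \<noteq> s"
  shows "eff_resistance n (altered_cond a b t) r s = 2 / real n"
proof -
  let ?v = "midpoint_potential r s"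
  have "?v a = ?v b" using assms(1) by (auto simp: midpoint_potential_simps)
  then have flow: "(\<Sum>j<n. altered_cond a b t i j * (?v i - ?v j)) = real n * ?v i - real n / 2"
    if "i < n" for i
    using sum_flow_altered_cond[OF that assms(2-4), of t ?v] sum_midpoint_potential[OF assms(6-8)]
    by simp
  have up: "unit_potential n (altered_cond a b t) r s ?v"
    unfolding unit_potential_def using flow midpoint_potential_simps \<open>r \<noteq> s\<close> by simp
  have current: "net_current n (altered_cond a b t) r ?v = real n / 2"
    unfolding net_current_def flow[OF \<open>r < n\<close>] by (simp add: midpoint_potential_simps)
  show ?thesis unfolding eff_resistance_altered_cond[OF up assms(5-8)] current by simp
qed

lemma eff_resistance_altered_cond_adjacent_edge:
  assumes "x < n" "x \<noteq> r" "x \<noteq> s" "t \<ge> 0" "r < n" "s < n" "r \<noteq> s"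
  shows "eff_resistance n (altered_cond r x t) r s =
    (2 * real n + 3 * t - 3) / (real n * (real n + 2 * t - 2))"
proof -
  \<comment> \<open>KCL at x forces y D = n + 3t - 3; at the remaining vertices it forces 3 w = 1 + y\<close>
  define D where "D = 2 * real n + 3 * t - 3"
  define y where "y = 1 - real n / D"
  define w where "w = (1 + y) / 3"
  define v where "v i = (if i = r then 1 else if i = s then 0 else if i = x then y else w)" for i
  have pot: "v r = 1" "v s = 0" "v x = y" "\<And>i. i \<notin> {r, s, x} \<Longrightarrow> v i = w"
    using assms(2,3,7) by (simp_all add: v_def)
  have "n \<ge> 2" using assms(5-7) by linarith
  then have "D > 0" using \<open>t \<ge> 0\<close> unfolding D_def by simp
  have "(\<Sum>j<n. v j) = real n * w"
    using sum_lessThan_const_off[of "{r, s, x}" n v w] assms pot by (simp add: w_def field_simps)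
  then have flow: "(\<Sum>j<n. altered_cond r x t i j * (v i - v j)) = real n * (v i - w)
      + (if i = r then (t - 1) * (1 - y) else if i = x then (t - 1) * (y - 1) else 0)"
    if "i < n" for i
    using sum_flow_altered_cond[OF that assms(5,1) assms(2)[symmetric], of t v] pot(1,3)
    by (simp add: algebra_simps)
  have "real n * (y - w) + (t - 1) * (y - 1) = 0"
    unfolding w_def y_def using \<open>D > 0\<close> by (simp add: field_simps) (simp add: D_def algebra_simps)
  then have up: "unit_potential n (altered_cond r x t) r s v"
    unfolding unit_potential_def using flow pot by auto
  have current: "net_current n (altered_cond r x t) r v = real n * (real n + 2 * t - 2) / D"
    unfolding net_current_def flow[OF \<open>r < n\<close>] using pot(1) \<open>D > 0\<close> unfolding w_def y_def
    by (simp add: field_simps) (simp add: D_def algebra_simps)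
  show ?thesis unfolding eff_resistance_altered_cond[OF up assms(4-7)] current by (simp add: D_def)
qed

lemma eff_resistance_altered_cond_one_shared:
  assumes "card ({a, b} \<inter> {r, s}) = 1" "a < n" "b < n" "a \<noteq> b" "t \<ge> 0"
    "r < n" "s < n" "r \<noteq> s"
  shows "eff_resistance n (altered_cond a b t) r s =
    (2 * real n + 3 * t - 3) / (real n * (real n + 2 * t - 2))"
proof -
  obtain p where p: "{a, b} \<inter> {r, s} = {p}" using assms(1) by (auto simp: card_1_singleton_iff)
  define x where "x = (if p = a then b else a)"
  have "altered_cond a b = altered_cond p x"
    using p altered_cond_commute[of a b] by (auto simp: x_def)
  moreover have "x < n" using assms(2,3) by (simp add: x_def)
  moreover have "x \<notin> {r, s}" using p \<open>a \<noteq> b\<close> by (auto simp: x_def)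
  moreover have "p = r \<or> p = s" using p by auto
  ultimately show ?thesis
    using eff_resistance_altered_cond_adjacent_edge[of x n r s t]
      eff_resistance_altered_cond_adjacent_edge[of x n s r t]
      eff_resistance_commute[of "altered_cond p x t" r n s] altered_cond_sym assms(5-8)
    by auto
qed

theorem lemmaB1:
  fixes n r s a b :: nat
  assumes "n \<ge> 3" and "r < n" and "s < n" and "r \<noteq> s"
    and "a < n" and "b < n" and "a \<noteq> b"
  shows
   "({a, b} = {r, s} \<longrightarrow>
       ((\<lambda>t. eff_resistance n (altered_cond a b t) r s) \<longlongrightarrow>
          eff_resistance n complete_cond r s - 2 / real n) at_top)
    \<and> (card ({a, b} \<inter> {r, s}) = 1 \<longrightarrow>
       ((\<lambda>t. eff_resistance n (altered_cond a b t) r s) \<longlongrightarrow>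
          eff_resistance n complete_cond r s - 1 / (2 * real n)) at_top)
    \<and> ({a, b} \<inter> {r, s} = {} \<longrightarrow>
       ((\<lambda>t. eff_resistance n (altered_cond a b t) r s) \<longlongrightarrow>
          eff_resistance n complete_cond r s - 0) at_top)
    \<and> ({a, b} = {r, s} \<longrightarrow>
       eff_resistance n (altered_cond a b 0) r s =
          eff_resistance n complete_cond r s - (- 4 / (real n * (real n - 2))))
    \<and> (card ({a, b} \<inter> {r, s}) = 1 \<longrightarrow>
       eff_resistance n (altered_cond a b 0) r s =
          eff_resistance n complete_cond r s - (- 1 / (real n * (real n - 2))))
    \<and> ({a, b} \<inter> {r, s} = {} \<longrightarrow>
       eff_resistance n (altered_cond a b 0) r s =
          eff_resistance n complete_cond r s - 0)"
proof -
  have "real n \<ge> 3" using assms(1) by simp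
  have R: "eff_resistance n complete_cond r s = 2 / real n"
    using eff_resistance_altered_cond_same_edge[of r s r s 1 n] complete_cond_eq_altered_cond[of r s]
      assms(2-4) by simp
  have lim: "((\<lambda>t. eff_resistance n (altered_cond a b t) r s) \<longlongrightarrow> L) at_top"
    if "\<And>t. t \<ge> 0 \<Longrightarrow> eff_resistance n (altered_cond a b t) r s = f t" "(f \<longlongrightarrow> L) at_top"
    for f L
    using that(2) eventually_mono[OF eventually_ge_at_top[of 0] that(1)[symmetric]]
    by (rule Lim_transform_eventually)
  note same_edge = eff_resistance_altered_cond_same_edge[OF _ _ assms(2-4)]
  note one_shared = eff_resistance_altered_cond_one_shared[OF _ assms(5-7) _ assms(2-4)]
  note disjoint = eff_resistance_altered_cond_disjoint_edge[OF _ assms(5-7) _ assms(2-4)]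
  have "((\<lambda>t. 2 / (real n + 2 * t - 2)) \<longlongrightarrow> 0) at_top"
    by real_asymp
  moreover have "((\<lambda>t. (2 * real n + 3 * t - 3) / (real n * (real n + 2 * t - 2)))
      \<longlongrightarrow> 3 / (2 * real n)) at_top"
    using \<open>real n \<ge> 3\<close> by real_asymp (simp add: field_simps)
  moreover have "2 / real n - 1 / (2 * real n) = 3 / (2 * real n)"
    "2 / real n + 4 / (real n * (real n - 2)) = 2 / (real n + 2 * 0 - 2)"
    "2 / real n + 1 / (real n * (real n - 2)) =
      (2 * real n + 3 * 0 - 3) / (real n * (real n + 2 * 0 - 2))"
    using \<open>real n \<ge> 3\<close> by (simp_all add: field_simps)
  ultimately show ?thesis
    unfolding R
    using lim[OF same_edge] lim[OF one_shared] lim[OF disjoint] same_edge one_shared disjoint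
    by auto
qed

end
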